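(* Let $n\ge1$ be an integer, $\alpha\ge0$, and let $p(x)=\sum_{j=k}^m c_jx^j$ be a real polynomial with $m\ge k\ge1$ and $c_m,c_k>0$. Define $$f_\alpha(t):=\int_0^\infty x^\alpha e^{-tx^n}\,dx,\qquad g(t):=\int_0^\infty e^{-tp(x)}\,dx.$$ Then there exist constants $C,t_0>0$ depending only on $\alpha$, $n$, $k$ and the coefficients of $p$ such that $$\frac{f_\alpha(t)}{g(t)}\le C\,t^{\frac1k-\frac{\alpha+1}{n}}\qquad\text{for all } t\ge t_0.$$ *)

theory Defs
  imports "HOL-Analysis.Analysis" "HOL-Computational_Algebra.Polynomial"
begin

definition f_alpha :: "real \<Rightarrow> nat \<Rightarrow> real \<Rightarrow> real" where
  "f_alpha \<alpha> n t = (LBINT x:{0<..}. x powr \<alpha> * exp (- t * x ^ n))"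

definition g_poly :: "real poly \<Rightarrow> real \<Rightarrow> real" where
  "g_poly p t = (LBINT x:{0<..}. exp (- t * poly p x))"

end

theory Submission
  imports Defs
begin

text \<open>Substituting \<open>x = t powr (-1/n) * y\<close> gives \<open>f\<^sub>\<alpha>(t) = t powr (-(\<alpha>+1)/n) * f\<^sub>\<alpha>(1)\<close>.
  For the denominator only the vanishing of the coefficients below \<open>k\<close> matters: with \<open>A\<close> the
  sum of the absolute values of the coefficients, \<open>p x \<le> A x\<^sup>k\<close> on \<open>[0, 1]\<close>, so for \<open>t \<ge> 1\<close>
  the integrand of \<open>g(t)\<close> is at least \<open>exp (-A)\<close> on \<open>(0, t powr (-1/k)]\<close>. Hence
  \<open>g(t) \<ge> t powr (-1/k) * exp (-A)\<close>, and the quotient is bounded with \<open>t\<^sub>0 = 1\<close>.\<close>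

lemma set_integral_Ioi_dilate:
  fixes f :: "real \<Rightarrow> 'a::{banach, second_countable_topology}"
  assumes "c > 0"
  shows "(LBINT x:{0<..}. f x) = c *\<^sub>R (LBINT x:{0<..}. f (c * x))"
proof -
  have "(LBINT x:{0<..}. f x)
      = c *\<^sub>R (\<integral>x. indicator {0<..} (0 + c * x) *\<^sub>R f (0 + c * x) \<partial>lborel)"
    unfolding set_lebesgue_integral_def using assms
    by (subst lborel_integral_real_affine[where c = c and t = 0]) auto
  also have "(\<lambda>x. indicator {0<..} (0 + c * x) *\<^sub>R f (0 + c * x))
      = (\<lambda>x. indicator {0<..} x *\<^sub>R f (c * x))"
    using assms by (auto simp: indicator_def zero_less_mult_iff)
  finally show ?thesis by (simp add: set_lebesgue_integral_def)
qed

lemma mult_powr_neg_inverse_power: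
  fixes t :: real
  assumes "t > 0" and "n > 0"
  shows "t * (t powr (- 1 / n)) ^ n = 1"
proof -
  have "(t powr (- 1 / n)) ^ n = t powr (- 1)"
    using assms by (simp add: powr_realpow[symmetric] powr_powr)
  then show ?thesis using assms by (simp add: powr_minus)
qed

lemma f_alpha_rescale:
  assumes "t > 0" and "n \<ge> 1"
  shows "f_alpha \<alpha> n t = t powr (- (\<alpha> + 1) / n) * f_alpha \<alpha> n 1"
proof -
  define c where "c = t powr (- 1 / n)"
  have c_pos: "c > 0" using assms by (simp add: c_def)
  have t_c_pow: "t * c ^ n = 1"
    unfolding c_def using assms by (intro mult_powr_neg_inverse_power) auto
  have "f_alpha \<alpha> n t = c * (LBINT y:{0<..}. (c * y) powr \<alpha> * exp (- t * (c * y) ^ n))"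
    unfolding f_alpha_def using c_pos by (subst set_integral_Ioi_dilate) auto
  also have "(LBINT y:{0<..}. (c * y) powr \<alpha> * exp (- t * (c * y) ^ n))
      = (LBINT y:{0<..}. c powr \<alpha> * (y powr \<alpha> * exp (- 1 * y ^ n)))"
  proof (rule set_lebesgue_integral_cong)
    have "t * (c * y) ^ n = y ^ n" for y
      using t_c_pow by (simp add: power_mult_distrib mult.assoc[symmetric])
    then show "\<forall>y. y \<in> {0<..} \<longrightarrow>
        (c * y) powr \<alpha> * exp (- t * (c * y) ^ n) = c powr \<alpha> * (y powr \<alpha> * exp (- 1 * y ^ n))"
      using c_pos by (simp add: powr_mult)
  qed simp
  also have "\<dots> = c powr \<alpha> * f_alpha \<alpha> n 1"
    by (simp add: f_alpha_def)
  also have "c * (c powr \<alpha> * f_alpha \<alpha> n 1) = c powr (\<alpha> + 1) * f_alpha \<alpha> n 1"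
    using c_pos by (simp add: powr_add)
  also have "c powr (\<alpha> + 1) = t powr (- (\<alpha> + 1) / n)"
    unfolding c_def using assms by (simp add: powr_powr diff_divide_distrib add_divide_distrib)
  finally show ?thesis .
qed

lemma f_alpha_nonneg: "f_alpha \<alpha> n t \<ge> 0"
  unfolding f_alpha_def set_lebesgue_integral_def
  by (rule Bochner_Integration.integral_nonneg) (auto simp: indicator_def)

lemma poly_le_sum_abs_coeff_mult_power:
  fixes p :: "real poly"
  assumes "\<forall>j<k. coeff p j = 0" and "0 \<le> x" and "x \<le> 1"
  shows "poly p x \<le> (\<Sum>j\<le>degree p. \<bar>coeff p j\<bar>) * x ^ k"
proof -
  have "coeff p j * x ^ j \<le> \<bar>coeff p j\<bar> * x ^ k" for j
  proof (cases "j < k")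
    case False
    then have "x ^ j \<le> x ^ k" using assms by (simp add: power_decreasing)
    then show ?thesis
      using assms by (meson abs_ge_zero abs_ge_self mult_mono order_trans zero_le_power)
  qed (use assms in simp)
  then have "(\<Sum>j\<le>degree p. coeff p j * x ^ j) \<le> (\<Sum>j\<le>degree p. \<bar>coeff p j\<bar> * x ^ k)"
    by (intro sum_mono)
  then show ?thesis by (simp add: poly_altdef sum_distrib_right)
qed

lemma g_poly_lower_bound:
  fixes p :: "real poly" and k :: nat and t :: real
  assumes "k \<ge> 1" and "\<forall>j<k. coeff p j = 0" and "t \<ge> 1"
    and "set_integrable lborel {0<..} (\<lambda>x. exp (- t * poly p x))"
  defines "A \<equiv> \<Sum>j\<le>degree p. \<bar>coeff p j\<bar>"
  shows "t powr (- 1 / k) * exp (- A) \<le> g_poly p t"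
proof -
  define d where "d = t powr (- 1 / k)"
  have d_pos: "d > 0" using assms by (simp add: d_def)
  have d_le_1: "d \<le> 1"
    unfolding d_def using assms by (simp add: powr_minus_divide ge_one_powr_ge_zero)
  have t_d_pow: "t * d ^ k = 1"
    unfolding d_def using assms by (intro mult_powr_neg_inverse_power) auto
  have A_nonneg: "A \<ge> 0" unfolding A_def by (simp add: sum_nonneg)
  have exponent_bound: "t * poly p x \<le> A" if "0 < x" "x \<le> d" for x
  proof -
    have "t * poly p x \<le> t * (A * x ^ k)"
      using poly_le_sum_abs_coeff_mult_power[OF assms(2), of x] that d_le_1 assms(3)
      unfolding A_def by (intro mult_left_mono) auto
    also have "\<dots> \<le> A * (t * d ^ k)"
      using that assms(3) A_nonneg by (simp add: mult_left_mono power_mono mult.left_commute)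
    finally show ?thesis using t_d_pow by simp
  qed
  have "d * exp (- A) = (\<integral>x. indicator {0<..d} x * exp (- A) \<partial>lborel)"
    using d_pos by simp
  also have "\<dots> \<le> (\<integral>x. indicator {0<..} x * exp (- t * poly p x) \<partial>lborel)"
  proof (rule integral_mono)
    show "integrable lborel (\<lambda>x. indicator {0<..d} x * exp (- A))"
      using d_pos by (intro integrable_mult_left integrable_real_indicator)
        (auto simp: emeasure_lborel_Ioc)
    show "integrable lborel (\<lambda>x. indicator {0<..} x * exp (- t * poly p x))"
      using assms(4) by (simp add: set_integrable_def)
    show "indicator {0<..d} x * exp (- A) \<le> indicator {0<..} x * exp (- t * poly p x)" for x
      using exponent_bound[of x] by (auto simp: indicator_def)
  qed
  also have "\<dots> = g_poly p t"
    by (simp add: g_poly_def set_lebesgue_integral_def)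
  finally show ?thesis by (simp add: d_def)
qed

lemma f_alpha_div_g_poly_le:
  fixes p :: "real poly" and k :: nat and t :: real
  assumes "n \<ge> 1" and "k \<ge> 1" and "\<forall>j<k. coeff p j = 0" and "t \<ge> 1"
  defines "A \<equiv> \<Sum>j\<le>degree p. \<bar>coeff p j\<bar>"
  shows "f_alpha \<alpha> n t / g_poly p t
    \<le> f_alpha \<alpha> n 1 * exp A * t powr (1 / k - (\<alpha> + 1) / n)"
proof (cases "set_integrable lborel {0<..} (\<lambda>x. exp (- t * poly p x))")
  case True
  define L where "L = t powr (- 1 / k) * exp (- A)"
  have L_pos: "L > 0" using assms(4) by (simp add: L_def)
  have g_ge_L: "L \<le> g_poly p t"
    using g_poly_lower_bound[OF assms(2,3,4) True] by (simp add: L_def A_def)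
  have "f_alpha \<alpha> n t / g_poly p t \<le> f_alpha \<alpha> n t / L"
    using L_pos g_ge_L f_alpha_nonneg by (intro divide_left_mono) auto
  also have "\<dots> = f_alpha \<alpha> n 1 * exp A * (t powr (- (\<alpha> + 1) / n) * t powr (1 / k))"
    using f_alpha_rescale[of t n \<alpha>] assms(1,4) unfolding L_def
    by (simp add: powr_minus_divide exp_minus field_simps)
  also have "t powr (- (\<alpha> + 1) / n) * t powr (1 / k) = t powr (1 / k - (\<alpha> + 1) / n)"
    unfolding powr_add[symmetric] minus_divide_left[symmetric] by argo
  finally show ?thesis .
next
  case False
  \<comment> \<open>The Bochner integral of a non-integrable function is \<open>0\<close>, and so is the quotient.\<close>
  then have "g_poly p t = 0"
    unfolding g_poly_def set_lebesgue_integral_def set_integrable_def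
    by (simp add: not_integrable_integral_eq)
  then show ?thesis using f_alpha_nonneg by simp
qed

theorem lemma4p12:
  fixes n k m :: nat and \<alpha> :: real and p :: "real poly"
  assumes "n \<ge> 1" and "\<alpha> \<ge> 0"
    and "1 \<le> k" and "k \<le> m"
    and "degree p = m"
    and "\<forall>j<k. coeff p j = 0"
    and "coeff p m > 0" and "coeff p k > 0"
  shows "\<exists>C t0. C > 0 \<and> t0 > 0 \<and>
           (\<forall>t\<ge>t0. f_alpha \<alpha> n t / g_poly p t
                     \<le> C * t powr (1 / real k - (\<alpha> + 1) / real n))"
proof -
  define C where "C = (f_alpha \<alpha> n 1 + 1) * exp (\<Sum>j\<le>degree p. \<bar>coeff p j\<bar>)"
  have "f_alpha \<alpha> n t / g_poly p t \<le> C * t powr (1 / real k - (\<alpha> + 1) / real n)"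
    if "t \<ge> 1" for t
  proof -
    note f_alpha_div_g_poly_le[OF assms(1,3,6) that, of \<alpha>]
    also have "f_alpha \<alpha> n 1 * exp (\<Sum>j\<le>degree p. \<bar>coeff p j\<bar>)
        * t powr (1 / real k - (\<alpha> + 1) / real n)
      \<le> C * t powr (1 / real k - (\<alpha> + 1) / real n)"
      unfolding C_def by (intro mult_right_mono) auto
    finally show ?thesis .
  qed
  moreover have "C > 0"
    unfolding C_def using f_alpha_nonneg[of \<alpha> n 1] by (simp add: add_nonneg_pos)
  ultimately show ?thesis by (intro exI[of _ C] exI[of _ 1]) auto
qed

end
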